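(* If there exist a CMDRR$(n,k)$, a SAMDRR$(m)$, and two mutually orthogonal latin squares of order $n$, then there exists a CMDRR$(mn, mk)$.
   Context: A mixed doubles game is a match between two teams, each team consisting of one man and one woman; in a game $M_a F_b$ v $M_c F_d$, $M_a$ and $F_b$ are partners, $M_c$ and $F_d$ are partners, and each player of one team opposes each player of the other team. A complete mixed doubles round robin tournament CMDRR$(n,k)$ is a schedule (set) of mixed doubles games for $n$ men and $n$ women, of which $k$ men and $k$ women are paired into $k$ spouse pairs (a spouse pair is one man and one woman), such that: spouses never play in a game together as partners or opponents; every man and woman who are not spouses are partners exactly once and opponents exactly once; each player who has a spouse opposes every other player of the same sex exactly once; each player who does not have a spouse opposes some other same-sex player who does not have a spouse exactly twice and opposes all other same-sex players exactly once. A spouse-avoiding mixed doubles round robin tournament SAMDRR$(m)$ is a schedule of mixed doubles games for $m$ husband-and-wife couples in which spouses never play in a game together as partners or opponents, every man and woman who are not spouses are partners exactly once and opponents exactly once, and every pair of players of the same sex are opponents exactly once (i.e. a CMDRR$(m,m)$). *)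

theory Defs
  imports Main
begin

text \<open>Players: men M_0..M_(n-1) and women F_0..F_(n-1), both indexed by {..<n}.
A team is a pair (man, woman). A game M_a F_b v M_c F_d is the unordered pair of
teams {(a,b),(c,d)}.\<close>

type_synonym team = "nat \<times> nat"
type_synonym game = "team set"

definition is_game :: "nat \<Rightarrow> game \<Rightarrow> bool" where
  "is_game n g \<longleftrightarrow> (\<exists>a b c d. g = {(a,b),(c,d)} \<and> a < n \<and> b < n \<and> c < n \<and> d < n
                         \<and> a \<noteq> c \<and> b \<noteq> d)"

definition plays_man :: "game \<Rightarrow> nat \<Rightarrow> bool" where
  "plays_man g x \<longleftrightarrow> (\<exists>t\<in>g. fst t = x)"

definition plays_woman :: "game \<Rightarrow> nat \<Rightarrow> bool" where
  "plays_woman g y \<longleftrightarrow> (\<exists>t\<in>g. snd t = y)"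

definition partners :: "game set \<Rightarrow> nat \<Rightarrow> nat \<Rightarrow> nat" where
  "partners S a b = card {g\<in>S. (a,b) \<in> g}"

definition opp_mw :: "game set \<Rightarrow> nat \<Rightarrow> nat \<Rightarrow> nat" where
  "opp_mw S a b = card {g\<in>S. \<exists>t\<in>g. \<exists>u\<in>g. t \<noteq> u \<and> fst t = a \<and> snd u = b}"

definition opp_mm :: "game set \<Rightarrow> nat \<Rightarrow> nat \<Rightarrow> nat" where
  "opp_mm S a c = card {g\<in>S. \<exists>t\<in>g. \<exists>u\<in>g. t \<noteq> u \<and> fst t = a \<and> fst u = c}"

definition opp_ww :: "game set \<Rightarrow> nat \<Rightarrow> nat \<Rightarrow> nat" where
  "opp_ww S b d = card {g\<in>S. \<exists>t\<in>g. \<exists>u\<in>g. t \<noteq> u \<and> snd t = b \<and> snd u = d}"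

definition spouse_pairs :: "nat \<Rightarrow> nat \<Rightarrow> team set \<Rightarrow> bool" where
  "spouse_pairs n k sp \<longleftrightarrow> sp \<subseteq> {..<n} \<times> {..<n} \<and> card sp = k
     \<and> (\<forall>p\<in>sp. \<forall>q\<in>sp. fst p = fst q \<longleftrightarrow> snd p = snd q)"

definition has_spouse_m :: "team set \<Rightarrow> nat \<Rightarrow> bool" where
  "has_spouse_m sp a \<longleftrightarrow> (\<exists>y. (a,y) \<in> sp)"

definition has_spouse_w :: "team set \<Rightarrow> nat \<Rightarrow> bool" where
  "has_spouse_w sp b \<longleftrightarrow> (\<exists>x. (x,b) \<in> sp)"

definition is_cmdrr :: "nat \<Rightarrow> nat \<Rightarrow> team set \<Rightarrow> game set \<Rightarrow> bool" where
  "is_cmdrr n k sp S \<longleftrightarrow>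
     spouse_pairs n k sp \<and>
     (\<forall>g\<in>S. is_game n g) \<and>
     (\<forall>g\<in>S. \<forall>(x,y)\<in>sp. \<not> (plays_man g x \<and> plays_woman g y)) \<and>
     (\<forall>a<n. \<forall>b<n. (a,b) \<notin> sp \<longrightarrow> partners S a b = 1 \<and> opp_mw S a b = 1) \<and>
     (\<forall>a<n. has_spouse_m sp a \<longrightarrow> (\<forall>c<n. c \<noteq> a \<longrightarrow> opp_mm S a c = 1)) \<and>
     (\<forall>a<n. \<not> has_spouse_m sp a \<longrightarrow>
        (\<exists>c<n. c \<noteq> a \<and> \<not> has_spouse_m sp c \<and> opp_mm S a c = 2 \<and>
           (\<forall>c'<n. c' \<noteq> a \<and> c' \<noteq> c \<longrightarrow> opp_mm S a c' = 1))) \<and>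
     (\<forall>b<n. has_spouse_w sp b \<longrightarrow> (\<forall>d<n. d \<noteq> b \<longrightarrow> opp_ww S b d = 1)) \<and>
     (\<forall>b<n. \<not> has_spouse_w sp b \<longrightarrow>
        (\<exists>d<n. d \<noteq> b \<and> \<not> has_spouse_w sp d \<and> opp_ww S b d = 2 \<and>
           (\<forall>d'<n. d' \<noteq> b \<and> d' \<noteq> d \<longrightarrow> opp_ww S b d' = 1)))"

definition CMDRR_exists :: "nat \<Rightarrow> nat \<Rightarrow> bool" where
  "CMDRR_exists n k \<longleftrightarrow> (\<exists>sp S. is_cmdrr n k sp S)"

definition SAMDRR_exists :: "nat \<Rightarrow> bool" where
  "SAMDRR_exists m \<longleftrightarrow> CMDRR_exists m m"

definition latin_square :: "nat \<Rightarrow> (nat \<Rightarrow> nat \<Rightarrow> nat) \<Rightarrow> bool" where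
  "latin_square n L \<longleftrightarrow>
     (\<forall>i<n. bij_betw (L i) {..<n} {..<n}) \<and> (\<forall>j<n. bij_betw (\<lambda>i. L i j) {..<n} {..<n})"

definition orthogonal :: "nat \<Rightarrow> (nat \<Rightarrow> nat \<Rightarrow> nat) \<Rightarrow> (nat \<Rightarrow> nat \<Rightarrow> nat) \<Rightarrow> bool" where
  "orthogonal n L1 L2 \<longleftrightarrow> inj_on (\<lambda>(i,j). (L1 i j, L2 i j)) ({..<n} \<times> {..<n})"

definition two_MOLS_exist :: "nat \<Rightarrow> bool" where
  "two_MOLS_exist n \<longleftrightarrow> (\<exists>L1 L2. latin_square n L1 \<and> latin_square n L2 \<and> orthogonal n L1 L2)"

end

theory Submission
  imports Defs
begin

text \<open>Players of the product are pairs (group, index), a group being a player of the SAMDRR(m)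
  and the index a player of the CMDRR(n,k); the spouses of the product are the pairs of spouses in
  both coordinates. Each spouse pair \<open>T\<close> of the SAMDRR carries a copy of the CMDRR between the men of
  group \<open>fst T\<close> and the women of group \<open>snd T\<close>. Every game \<open>{T, U}\<close> of the SAMDRR is blown up into
  \<open>n\<^sup>2\<close> games, one per cell \<open>(x, y)\<close>: the teams \<open>T\<close> and \<open>U\<close> receive the indices
  \<open>(x, L1 x y)\<close> and \<open>(y, L2 x y)\<close>. Since the two orthogonal latin squares form an orthogonal array,
  any two of the four indices in a cell determine the cell; so two players whose groups meet in
  a unique SAMDRR game meet in exactly one of its \<open>n\<^sup>2\<close> cells, whereas players whose groups are
  spouses meet exactly as their indices do in the CMDRR.\<close>

definition enc :: "nat \<Rightarrow> nat \<Rightarrow> nat \<Rightarrow> nat" where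
  "enc n i x = i * n + x"

lemma enc_eq_iff [simp]:
  assumes "x < n" "y < n"
  shows "enc n i x = enc n j y \<longleftrightarrow> i = j \<and> x = y"
proof
  assume eq: "enc n i x = enc n j y"
  have "i = enc n i x div n" "x = enc n i x mod n"
    using assms by (simp_all add: enc_def)
  moreover have "j = enc n j y div n" "y = enc n j y mod n"
    using assms by (simp_all add: enc_def)
  ultimately show "i = j \<and> x = y" using eq by metis
qed simp

lemma enc_less:
  assumes "i < m" "x < n"
  shows "enc n i x < m * n"
proof -
  have "enc n i x < Suc i * n" using assms(2) by (simp add: enc_def)
  also have "\<dots> \<le> m * n" using assms(1) by (intro mult_le_mono1) simp
  finally show ?thesis .
qed

lemma enc_cases:
  assumes "p < m * n"
  obtains i x where "i < m" "x < n" "p = enc n i x"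
proof
  show "p div n < m" using assms by (simp add: less_mult_imp_div_less)
  show "p mod n < n" using assms by (cases "n = 0") simp_all
  show "p = enc n (p div n) (p mod n)" by (simp add: enc_def)
qed

datatype sex = Male | Female

fun player :: "sex \<Rightarrow> team \<Rightarrow> nat" where
  "player Male T = fst T"
| "player Female T = snd T"

definition has_spouse :: "sex \<Rightarrow> team set \<Rightarrow> nat \<Rightarrow> bool" where
  "has_spouse s sp a \<longleftrightarrow> (\<exists>T\<in>sp. player s T = a)"

text \<open>Player \<open>a\<close> of sex \<open>s\<close> meets player \<open>b\<close> of sex \<open>s'\<close> as partners if \<open>same\<close>, otherwise
  as opponents; the four counting functions of a CMDRR are instances of \<open>meetings\<close>.\<close>

definition meets :: "bool \<Rightarrow> sex \<Rightarrow> sex \<Rightarrow> game \<Rightarrow> nat \<Rightarrow> nat \<Rightarrow> bool" where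
  "meets same s s' g a b \<longleftrightarrow> (\<exists>t\<in>g. \<exists>u\<in>g. (t = u \<longleftrightarrow> same) \<and> player s t = a \<and> player s' u = b)"

definition meetings :: "bool \<Rightarrow> sex \<Rightarrow> sex \<Rightarrow> game set \<Rightarrow> nat \<Rightarrow> nat \<Rightarrow> nat" where
  "meetings same s s' S a b = card {g\<in>S. meets same s s' g a b}"

lemma meets_swap: "meets same s s' g a b \<longleftrightarrow> meets same s' s g b a"
  unfolding meets_def by (metis (full_types))

lemma meetings_swap: "meetings same s s' S a b = meetings same s' s S b a"
  unfolding meetings_def using meets_swap by metis

lemma partners_eq_meetings: "partners S a b = meetings True Male Female S a b"
  unfolding partners_def meetings_def meets_def by (rule arg_cong[where f = card]) force

lemma opp_mw_eq_meetings: "opp_mw S a b = meetings False Male Female S a b"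
  unfolding opp_mw_def meetings_def meets_def by simp

lemma opp_mm_eq_meetings: "opp_mm S a c = meetings False Male Male S a c"
  unfolding opp_mm_def meetings_def meets_def by simp

lemma opp_ww_eq_meetings: "opp_ww S b d = meetings False Female Female S b d"
  unfolding opp_ww_def meetings_def meets_def by simp

lemma plays_man_woman_iff_meets:
  "plays_man g a \<and> plays_woman g b \<longleftrightarrow> (\<exists>same. meets same Male Female g a b)"
  unfolding plays_man_def plays_woman_def meets_def by auto

definition same_sex_opposition :: "sex \<Rightarrow> nat \<Rightarrow> team set \<Rightarrow> game set \<Rightarrow> bool" where
  "same_sex_opposition s N sp S \<longleftrightarrow>
     (\<forall>a<N. has_spouse s sp a \<longrightarrow> (\<forall>c<N. c \<noteq> a \<longrightarrow> meetings False s s S a c = 1)) \<and>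
     (\<forall>a<N. \<not> has_spouse s sp a \<longrightarrow>
        (\<exists>c<N. c \<noteq> a \<and> \<not> has_spouse s sp c \<and> meetings False s s S a c = 2 \<and>
           (\<forall>c'<N. c' \<noteq> a \<and> c' \<noteq> c \<longrightarrow> meetings False s s S a c' = 1)))"

lemma is_cmdrr_altdef:
  "is_cmdrr N K sp S \<longleftrightarrow>
     spouse_pairs N K sp \<and>
     (\<forall>g\<in>S. is_game N g) \<and>
     (\<forall>g\<in>S. \<forall>T\<in>sp. \<forall>same. \<not> meets same Male Female g (fst T) (snd T)) \<and>
     (\<forall>a<N. \<forall>b<N. (a, b) \<notin> sp \<longrightarrow>
        (\<forall>same. meetings same Male Female S a b = 1)) \<and>
     same_sex_opposition Male N sp S \<and> same_sex_opposition Female N sp S"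
proof -
  have spouse: "has_spouse_m sp = has_spouse Male sp" "has_spouse_w sp = has_spouse Female sp"
    unfolding has_spouse_m_def has_spouse_w_def has_spouse_def by force+
  have mixed: "(\<forall>same. meetings same Male Female S a b = 1) \<longleftrightarrow>
      partners S a b = 1 \<and> opp_mw S a b = 1" for a b
    by (metis (full_types) partners_eq_meetings opp_mw_eq_meetings)
  have avoid: "(\<forall>(x, y)\<in>sp. \<not> (plays_man g x \<and> plays_woman g y)) \<longleftrightarrow>
      (\<forall>T\<in>sp. \<forall>same. \<not> meets same Male Female g (fst T) (snd T))" for g
    by (simp add: plays_man_woman_iff_meets split_def)
  show ?thesis
    unfolding is_cmdrr_def same_sex_opposition_def opp_mm_eq_meetings opp_ww_eq_meetings
      spouse mixed avoid conj_assoc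
    by (rule refl)
qed

lemma cmdrr_spouse_pairs: "is_cmdrr N K sp S \<Longrightarrow> spouse_pairs N K sp"
  unfolding is_cmdrr_def by (elim conjE)

lemma cmdrr_game: "is_cmdrr N K sp S \<Longrightarrow> g \<in> S \<Longrightarrow> is_game N g"
  unfolding is_cmdrr_def by (elim conjE) (rule bspec)

lemma cmdrr_spouses_apart:
  "is_cmdrr N K sp S \<Longrightarrow> g \<in> S \<Longrightarrow> T \<in> sp \<Longrightarrow> \<not> meets same Male Female g (fst T) (snd T)"
  unfolding is_cmdrr_altdef by (elim conjE) blast

lemma cmdrr_mixed:
  "is_cmdrr N K sp S \<Longrightarrow> a < N \<Longrightarrow> b < N \<Longrightarrow> (a, b) \<notin> sp \<Longrightarrow> meetings same Male Female S a b = 1"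
  unfolding is_cmdrr_altdef by (elim conjE) blast

lemma cmdrr_same_sex_opposition: "is_cmdrr N K sp S \<Longrightarrow> same_sex_opposition s N sp S"
  unfolding is_cmdrr_altdef by (cases s) simp_all

lemma is_game_player_less: "is_game n g \<Longrightarrow> t \<in> g \<Longrightarrow> player s t < n"
  unfolding is_game_def by (cases s) auto

lemma is_game_subset: "is_game n g \<Longrightarrow> g \<subseteq> {..<n} \<times> {..<n}"
  using is_game_player_less[of n g _ Male] is_game_player_less[of n g _ Female] by force

lemma finite_schedule_of_games: "\<forall>g\<in>S. is_game n g \<Longrightarrow> finite S"
  by (rule finite_subset[of _ "Pow ({..<n} \<times> {..<n})"]) (auto dest: is_game_subset)

lemma is_game_nonempty: "is_game n g \<Longrightarrow> g \<noteq> {}"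
  unfolding is_game_def by auto

lemma is_game_players_distinct:
  "is_game n g \<Longrightarrow> t \<in> g \<Longrightarrow> u \<in> g \<Longrightarrow> t \<noteq> u \<Longrightarrow> player s t \<noteq> player s u"
  unfolding is_game_def by (cases s) auto

lemma is_game_oriented:
  assumes "is_game n g"
  obtains T U where "g = {T, U}" "fst T < fst U"
proof -
  obtain a b c d where g: "g = {(a, b), (c, d)}" "a \<noteq> c"
    using assms unfolding is_game_def by blast
  show ?thesis
  proof (cases "a < c")
    case True
    then show ?thesis using that g by simp
  next
    case False
    then show ?thesis using that[of "(c, d)" "(a, b)"] g by (simp add: insert_commute)
  qed
qed

lemma oriented_pair_eq:
  "{T, U} = {T', U'} \<Longrightarrow> fst T < fst U \<Longrightarrow> fst T' < fst U' \<Longrightarrow> T = T' \<and> U = U'"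
  for T U T' U' :: "nat \<times> 'a"
  by (auto simp: doubleton_eq_iff)

lemma meets_image:
  assumes "inj_on f Q"
  shows "meets same s s' (f ` Q) a b \<longleftrightarrow>
    (\<exists>q\<in>Q. \<exists>q'\<in>Q. (q = q' \<longleftrightarrow> same) \<and> player s (f q) = a \<and> player s' (f q') = b)"
  unfolding meets_def by (auto simp: inj_on_eq_iff[OF assms])

lemma meets_pair:
  assumes "T \<noteq> U"
  shows "meets same s s' {T, U} a b \<longleftrightarrow>
    (\<exists>k k'. (k = k' \<longleftrightarrow> same) \<and> player s (if k then T else U) = a \<and> player s' (if k' then T else U) = b)"
  using assms unfolding meets_def by (auto simp: ex_bool_eq)

lemma spouse_pairs_inj_on_player: "spouse_pairs N K sp \<Longrightarrow> inj_on (player s) sp"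
  unfolding spouse_pairs_def inj_on_def by (cases s) (auto simp: prod_eq_iff)

lemma spouse_pairs_has_spouse:
  assumes "spouse_pairs N N sp" "a < N"
  shows "has_spouse s sp a"
proof -
  have sp: "sp \<subseteq> {..<N} \<times> {..<N}" "card sp = N"
    using assms(1) unfolding spouse_pairs_def by auto
  then have "player s ` sp \<subseteq> {..<N}" by (cases s) auto
  moreover have "card (player s ` sp) = N"
    using sp(2) card_image[OF spouse_pairs_inj_on_player[OF assms(1)]] by simp
  ultimately have "player s ` sp = {..<N}" by (intro card_subset_eq) simp_all
  then show ?thesis using assms(2) unfolding has_spouse_def by (metis imageE lessThan_iff)
qed

lemma cmdrr_spouses_never_meet:
  assumes "is_cmdrr N K sp S" "g \<in> S" "T \<in> sp" "same \<longrightarrow> s \<noteq> s'"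
  shows "\<not> meets same s s' g (player s T) (player s' T)"
proof
  assume meet: "meets same s s' g (player s T) (player s' T)"
  show False
  proof (cases "s = s'")
    case True
    then obtain t u where "t \<in> g" "u \<in> g" "t \<noteq> u" "player s t = player s u"
      using meet assms(4) unfolding meets_def by metis
    then show False
      using is_game_players_distinct[OF cmdrr_game[OF assms(1,2)]] by blast
  next
    case False
    then consider "s = Male" "s' = Female" | "s = Female" "s' = Male"
      by (cases s; cases s') simp_all
    then show False
      using meet cmdrr_spouses_apart[OF assms(1-3)] by cases (simp_all add: meets_swap[of same Female])
  qed
qed

lemma samdrr_meetings_once:
  assumes "is_cmdrr N N sp S" "same \<longrightarrow> s \<noteq> s'" "a < N" "b < N"
    and not_spouses: "\<not> (\<exists>T\<in>sp. player s T = a \<and> player s' T = b)"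
  shows "meetings same s s' S a b = 1"
proof (cases "s = s'")
  case True
  have "has_spouse s sp a"
    using spouse_pairs_has_spouse[OF cmdrr_spouse_pairs[OF assms(1)] assms(3)] .
  moreover from this have "b \<noteq> a" using not_spouses True unfolding has_spouse_def by auto
  moreover have "\<forall>a<N. has_spouse s sp a \<longrightarrow> (\<forall>c<N. c \<noteq> a \<longrightarrow> meetings False s s S a c = 1)"
    using cmdrr_same_sex_opposition[OF assms(1)] unfolding same_sex_opposition_def by (rule conjunct1)
  ultimately show ?thesis using True assms(2-4) by simp
next
  case False
  then consider "s = Male" "s' = Female" | "s = Female" "s' = Male"
    by (cases s; cases s') simp_all
  then show ?thesis
  proof cases
    case 1
    then have "(a, b) \<notin> sp" using not_spouses by force
    then show ?thesis using cmdrr_mixed[OF assms(1,3,4)] 1 by simp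
  next
    case 2
    then have "(b, a) \<notin> sp" using not_spouses by force
    then show ?thesis using cmdrr_mixed[OF assms(1,4,3)] 2 by (simp add: meetings_swap)
  qed
qed

lemma is_game_pair_distinct: "is_game N {T, U} \<Longrightarrow> T \<noteq> U"
  unfolding is_game_def by (auto simp: doubleton_eq_iff)

lemma is_game_seat_unique:
  assumes "is_game N {T, U}" "player s (if j then T else U) = player s (if k then T else U)"
  shows "j = k"
  using assms is_game_players_distinct[OF assms(1), of T U s] is_game_pair_distinct[OF assms(1)]
  by (cases j; cases k) auto

lemma card_filter_image: "inj_on f A \<Longrightarrow> card {y \<in> f ` A. P y} = card {x \<in> A. P (f x)}"
proof -
  assume "inj_on f A"
  then have "inj_on f {x \<in> A. P (f x)}" by (rule inj_on_subset) blast
  moreover have "{y \<in> f ` A. P y} = f ` {x \<in> A. P (f x)}" by blast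
  ultimately show ?thesis by (simp add: card_image)
qed

lemma player_less: "P \<in> {..<n} \<times> {..<n} \<Longrightarrow> player s P < n"
  by (cases s) auto

definition lift_team :: "nat \<Rightarrow> team \<times> team \<Rightarrow> team" where
  "lift_team n = (\<lambda>(T, P). (enc n (fst T) (fst P), enc n (snd T) (snd P)))"

lemma lift_team_conv: "lift_team n (T, P) = (enc n (fst T) (fst P), enc n (snd T) (snd P))"
  by (simp add: lift_team_def)

lemma player_lift_team [simp]: "player s (lift_team n (T, P)) = enc n (player s T) (player s P)"
  by (cases s) (simp_all add: lift_team_conv)

lemma inj_on_lift_team: "inj_on (lift_team n) (UNIV \<times> ({..<n} \<times> {..<n}))"
  by (rule inj_onI) (auto simp: prod_eq_iff lift_team_conv)

lemma lift_team_in_square: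
  "T \<in> {..<m} \<times> {..<m} \<Longrightarrow> P \<in> {..<n} \<times> {..<n} \<Longrightarrow> lift_team n (T, P) \<in> {..<m * n} \<times> {..<m * n}"
  by (auto simp: enc_less lift_team_conv)

lemma meets_lift:
  assumes "Q \<subseteq> UNIV \<times> ({..<n} \<times> {..<n})" "x < n" "z < n"
  shows "meets same s s' (lift_team n ` Q) (enc n a x) (enc n b z) \<longleftrightarrow>
    (\<exists>q\<in>Q. \<exists>q'\<in>Q. (q = q' \<longleftrightarrow> same) \<and> player s (fst q) = a \<and> player s (snd q) = x \<and>
       player s' (fst q') = b \<and> player s' (snd q') = z)"
proof -
  have inj: "inj_on (lift_team n) Q" using inj_on_lift_team assms(1) by (rule inj_on_subset)
  have lift_eq: "player s'' (lift_team n q) = enc n c y \<longleftrightarrow> player s'' (fst q) = c \<and> player s'' (snd q) = y"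
    if "q \<in> Q" "y < n" for q s'' c y
  proof -
    obtain T P where q: "q = (T, P)" by (cases q)
    have "P \<in> {..<n} \<times> {..<n}" using that(1) assms(1) q by auto
    then have "player s'' P < n" by (rule player_less)
    then show ?thesis using that(2) q by simp
  qed
  show ?thesis
    unfolding meets_image[OF inj]
    by (intro bex_cong refl) (simp add: lift_eq assms(2,3))
qed

lemma spouse_pairs_lift:
  assumes "spouse_pairs m k1 sp1" "spouse_pairs n k2 sp2"
  shows "spouse_pairs (m * n) (k1 * k2) (lift_team n ` (sp1 \<times> sp2))"
proof -
  have sp1: "sp1 \<subseteq> {..<m} \<times> {..<m}" "card sp1 = k1" "\<forall>p\<in>sp1. \<forall>q\<in>sp1. fst p = fst q \<longleftrightarrow> snd p = snd q"
    and sp2: "sp2 \<subseteq> {..<n} \<times> {..<n}" "card sp2 = k2" "\<forall>p\<in>sp2. \<forall>q\<in>sp2. fst p = fst q \<longleftrightarrow> snd p = snd q"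
    using assms unfolding spouse_pairs_def by auto
  have "inj_on (lift_team n) (sp1 \<times> sp2)"
    using inj_on_lift_team by (rule inj_on_subset) (use sp2(1) in blast)
  then have "card (lift_team n ` (sp1 \<times> sp2)) = k1 * k2"
    using sp1(2) sp2(2) by (simp add: card_image card_cartesian_product)
  moreover have "lift_team n ` (sp1 \<times> sp2) \<subseteq> {..<m * n} \<times> {..<m * n}"
    using sp1(1) sp2(1) lift_team_in_square by blast
  moreover have "fst p = fst q \<longleftrightarrow> snd p = snd q"
    if pq_in: "p \<in> lift_team n ` (sp1 \<times> sp2)" "q \<in> lift_team n ` (sp1 \<times> sp2)" for p q
  proof -
    obtain T P T' P' where TP: "T \<in> sp1" "P \<in> sp2" "T' \<in> sp1" "P' \<in> sp2"
      and pq: "p = lift_team n (T, P)" "q = lift_team n (T', P')"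
      using pq_in by blast
    have "player s P < n" "player s P' < n" for s
      using TP(2,4) sp2(1) player_less by blast+
    then have "player s p = player s q \<longleftrightarrow> player s T = player s T' \<and> player s P = player s P'" for s
      unfolding pq player_lift_team by simp
    from this[of Male] this[of Female] show ?thesis
      using sp1(3) sp2(3) TP by simp
  qed
  ultimately show ?thesis unfolding spouse_pairs_def by blast
qed

lemma is_game_lift:
  assumes "T \<in> {..<m} \<times> {..<m}" "U \<in> {..<m} \<times> {..<m}" "P \<in> {..<n} \<times> {..<n}" "R \<in> {..<n} \<times> {..<n}"
    and "(fst T, fst P) \<noteq> (fst U, fst R)" "(snd T, snd P) \<noteq> (snd U, snd R)"
  shows "is_game (m * n) (lift_team n ` {(T, P), (U, R)})"
proof -
  obtain a b c d where ab: "lift_team n (T, P) = (a, b)" and cd: "lift_team n (U, R) = (c, d)"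
    by (metis surj_pair)
  have "a \<noteq> c" "b \<noteq> d"
    using assms(3-6) ab cd by (auto simp: lift_team_conv)
  moreover have "a < m * n" "b < m * n" "c < m * n" "d < m * n"
    using lift_team_in_square[OF assms(1,3)] lift_team_in_square[OF assms(2,4)] ab cd by auto
  ultimately show ?thesis
    unfolding is_game_def by (intro exI[of _ a] exI[of _ b] exI[of _ c] exI[of _ d]) (simp add: ab cd)
qed

lemma latin_square_less: "latin_square n L \<Longrightarrow> x < n \<Longrightarrow> y < n \<Longrightarrow> L x y < n"
  unfolding latin_square_def bij_betw_def by auto

lemma latin_square_row_inj:
  "latin_square n L \<Longrightarrow> L x y = L x y' \<Longrightarrow> x < n \<Longrightarrow> y < n \<Longrightarrow> y' < n \<Longrightarrow> y = y'"
  unfolding latin_square_def bij_betw_def inj_on_def by blast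

lemma latin_square_col_inj:
  "latin_square n L \<Longrightarrow> L x y = L x' y \<Longrightarrow> y < n \<Longrightarrow> x < n \<Longrightarrow> x' < n \<Longrightarrow> x = x'"
  unfolding latin_square_def bij_betw_def inj_on_def by blast

definition mols_team :: "(nat \<Rightarrow> nat \<Rightarrow> nat) \<Rightarrow> (nat \<Rightarrow> nat \<Rightarrow> nat) \<Rightarrow> nat \<times> nat \<Rightarrow> bool \<Rightarrow> team" where
  "mols_team L1 L2 c k = (case c of (x, y) \<Rightarrow> if k then (x, L1 x y) else (y, L2 x y))"

lemma mols_team_in_square:
  "latin_square n L1 \<Longrightarrow> latin_square n L2 \<Longrightarrow> c \<in> {..<n} \<times> {..<n} \<Longrightarrow>
    mols_team L1 L2 c k \<in> {..<n} \<times> {..<n}"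
  unfolding mols_team_def by (auto simp: latin_square_less)

text \<open>Two MOLS form an orthogonal array OA(4, n): any two of the entries \<open>x, L1 x y, y, L2 x y\<close>
  of a cell determine the cell, and they take every pair of values.\<close>

lemma mols_orthogonal_array:
  assumes L1: "latin_square n L1" and L2: "latin_square n L2" and orth: "orthogonal n L1 L2"
    and "(k, s) \<noteq> (k', s')"
  shows "bij_betw (\<lambda>c. (player s (mols_team L1 L2 c k), player s' (mols_team L1 L2 c k')))
    ({..<n} \<times> {..<n}) ({..<n} \<times> {..<n})"
    (is "bij_betw ?f ?A ?A")
proof -
  have orth': "x = x' \<and> y = y'" if "L1 x y = L1 x' y'" "L2 x y = L2 x' y'"
    "x < n" "y < n" "x' < n" "y' < n" for x y x' y'
    using inj_onD[OF orth[unfolded orthogonal_def], of "(x, y)" "(x', y')"] that by simp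
  have "inj_on ?f ?A"
    using assms(4) unfolding inj_on_def mols_team_def
    by (cases k; cases k'; cases s; cases s')
      (auto dest: latin_square_row_inj[OF L1] latin_square_row_inj[OF L2]
        latin_square_col_inj[OF L1] latin_square_col_inj[OF L2] orth')
  moreover have "?f ` ?A \<subseteq> ?A"
    using mols_team_in_square[OF L1 L2] player_less by blast
  ultimately show ?thesis by (simp add: bij_betw_def endo_inj_surj)
qed

locale cmdrr_product =
  fixes n k m :: nat and sp spm :: "team set" and S Sm :: "game set"
    and L1 L2 :: "nat \<Rightarrow> nat \<Rightarrow> nat"
  assumes inner: "is_cmdrr n k sp S" and outer: "is_cmdrr m m spm Sm"
    and L1: "latin_square n L1" and L2: "latin_square n L2" and orth: "orthogonal n L1 L2"
begin

definition block_game :: "team \<Rightarrow> game \<Rightarrow> game" where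
  "block_game T g = lift_team n ` ({T} \<times> g)"

definition cell_game :: "team \<Rightarrow> team \<Rightarrow> nat \<times> nat \<Rightarrow> game" where
  "cell_game T U c = lift_team n ` {(T, mols_team L1 L2 c True), (U, mols_team L1 L2 c False)}"

text \<open>Each game \<open>{T, U}\<close> of the SAMDRR is used once, in the orientation \<open>fst T < fst U\<close>.\<close>

definition cells :: "((team \<times> team) \<times> (nat \<times> nat)) set" where
  "cells = {((T, U), c). {T, U} \<in> Sm \<and> fst T < fst U \<and> c \<in> {..<n} \<times> {..<n}}"

definition schedule :: "game set" where
  "schedule = (\<lambda>(T, g). block_game T g) ` (spm \<times> S) \<union> (\<lambda>((T, U), c). cell_game T U c) ` cells"

definition spouses :: "team set" where
  "spouses = lift_team n ` (spm \<times> sp)"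

lemma inner_game: "g \<in> S \<Longrightarrow> is_game n g"
  by (rule cmdrr_game[OF inner])

lemma outer_game: "h \<in> Sm \<Longrightarrow> is_game m h"
  by (rule cmdrr_game[OF outer])

lemma spm_square: "T \<in> spm \<Longrightarrow> T \<in> {..<m} \<times> {..<m}"
  using cmdrr_spouse_pairs[OF outer] unfolding spouse_pairs_def by blast

lemma sp_square: "P \<in> sp \<Longrightarrow> P \<in> {..<n} \<times> {..<n}"
  using cmdrr_spouse_pairs[OF inner] unfolding spouse_pairs_def by blast

lemma finite_cells: "finite cells"
proof (rule finite_subset)
  show "cells \<subseteq> (({..<m} \<times> {..<m}) \<times> ({..<m} \<times> {..<m})) \<times> ({..<n} \<times> {..<n})"
    unfolding cells_def using outer_game is_game_subset by blast
qed simp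

lemma finite_schedule: "finite schedule"
proof -
  have "finite spm"
    using cmdrr_spouse_pairs[OF outer] unfolding spouse_pairs_def by (blast intro: finite_subset)
  moreover have "finite S" using finite_schedule_of_games inner_game by blast
  ultimately show ?thesis unfolding schedule_def using finite_cells by simp
qed

lemma inner_game_preimage: "g \<in> S \<Longrightarrow> {T} \<times> g \<subseteq> UNIV \<times> ({..<n} \<times> {..<n})"
  using is_game_subset[OF inner_game] by blast

lemma block_game_meets:
  assumes "g \<in> S" "x < n" "z < n"
  shows "meets same s s' (block_game T g) (enc n a x) (enc n b z) \<longleftrightarrow>
    player s T = a \<and> player s' T = b \<and> meets same s s' g x z"
  unfolding block_game_def
  using inner_game_preimage[OF assms(1), of T] by (simp only: meets_lift assms(2,3)) (auto simp: meets_def)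

lemma cell_game_meets:
  assumes "T \<noteq> U" "c \<in> {..<n} \<times> {..<n}" "x < n" "z < n"
  shows "meets same s s' (cell_game T U c) (enc n a x) (enc n b z) \<longleftrightarrow>
    (\<exists>j j'. (j = j' \<longleftrightarrow> same) \<and>
       player s (if j then T else U) = a \<and> player s' (if j' then T else U) = b \<and>
       player s (mols_team L1 L2 c j) = x \<and> player s' (mols_team L1 L2 c j') = z)"
proof -
  have "{(T, mols_team L1 L2 c True), (U, mols_team L1 L2 c False)} \<subseteq> UNIV \<times> ({..<n} \<times> {..<n})"
    using mols_team_in_square[OF L1 L2 assms(2)] by blast
  then show ?thesis
    unfolding cell_game_def by (simp only: meets_lift assms(3,4)) (use assms(1) in \<open>auto simp: ex_bool_eq\<close>)
qed

lemma cell_game_meets_outer: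
  assumes "T \<noteq> U" "c \<in> {..<n} \<times> {..<n}" "x < n" "z < n"
    and "meets same s s' (cell_game T U c) (enc n a x) (enc n b z)"
  shows "meets same s s' {T, U} a b"
proof -
  from assms(5) obtain j j' where "(j = j' \<longleftrightarrow> same)"
    "player s (if j then T else U) = a" "player s' (if j' then T else U) = b"
    unfolding cell_game_meets[OF assms(1-4)] by blast
  then show ?thesis unfolding meets_pair[OF assms(1)] by blast
qed

lemma inj_on_block_game: "inj_on (\<lambda>(T, g). block_game T g) (spm \<times> S)"
proof (rule inj_onI, clarify)
  fix T g T' g' assume g: "g \<in> S" "g' \<in> S" and eq: "block_game T g = block_game T' g'"
  have "{T} \<times> g = {T'} \<times> g'"
    using eq unfolding block_game_def
    inj_on_image_eq_iff[OF inj_on_lift_team inner_game_preimage[OF g(1)] inner_game_preimage[OF g(2)]] .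
  moreover have "g \<noteq> {}" "g' \<noteq> {}" using is_game_nonempty[OF inner_game] g by blast+
  ultimately show "T = T' \<and> g = g'" by (simp add: times_eq_iff)
qed

lemma cell_game_preimage:
  assumes "((T, U), c) \<in> cells"
  shows "{(T, mols_team L1 L2 c True), (U, mols_team L1 L2 c False)} \<subseteq> UNIV \<times> ({..<n} \<times> {..<n})"
proof -
  have "c \<in> {..<n} \<times> {..<n}" using assms unfolding cells_def by simp
  then show ?thesis using mols_team_in_square[OF L1 L2] by simp
qed

lemma inj_on_cell_game: "inj_on (\<lambda>((T, U), c). cell_game T U c) cells"
proof (rule inj_onI)
  fix t t' assume "t \<in> cells" "t' \<in> cells"
    and "(\<lambda>((T, U), c). cell_game T U c) t = (\<lambda>((T, U), c). cell_game T U c) t'"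
  moreover obtain T U c T' U' c' where t: "t = ((T, U), c)" "t' = ((T', U'), c')"
    by (metis surj_pair)
  ultimately have cell: "((T, U), c) \<in> cells" "((T', U'), c') \<in> cells"
    and eq: "cell_game T U c = cell_game T' U' c'" by simp_all
  have "{(T, mols_team L1 L2 c True), (U, mols_team L1 L2 c False)} =
      {(T', mols_team L1 L2 c' True), (U', mols_team L1 L2 c' False)}"
    using eq unfolding cell_game_def
      inj_on_image_eq_iff[OF inj_on_lift_team cell_game_preimage[OF cell(1)] cell_game_preimage[OF cell(2)]] .
  moreover have "fst T < fst U" "fst T' < fst U'" using cell unfolding cells_def by simp_all
  ultimately have "T = T' \<and> U = U' \<and> mols_team L1 L2 c True = mols_team L1 L2 c' True
      \<and> mols_team L1 L2 c False = mols_team L1 L2 c' False"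
    unfolding doubleton_eq_iff by auto
  then show "t = t'"
    unfolding t by (cases c; cases c') (simp add: mols_team_def)
qed

lemma block_game_neq_cell_game:
  assumes "g \<in> S" "((T, U), c) \<in> cells"
  shows "block_game T0 g \<noteq> cell_game T U c"
proof
  assume "block_game T0 g = cell_game T U c"
  then have "{T0} \<times> g = {(T, mols_team L1 L2 c True), (U, mols_team L1 L2 c False)}"
    unfolding block_game_def cell_game_def
      inj_on_image_eq_iff[OF inj_on_lift_team inner_game_preimage[OF assms(1)] cell_game_preimage[OF assms(2)]] .
  then have "T = T0" "U = T0" by blast+
  then show False using assms(2) unfolding cells_def by simp
qed

lemma card_filter_schedule:
  "card {G \<in> schedule. P G} =
    card {t \<in> spm \<times> S. P (case_prod block_game t)} +
    card {t \<in> cells. P (case_prod (\<lambda>(T, U). cell_game T U) t)}"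
proof -
  let ?B = "(\<lambda>(T, g). block_game T g) ` (spm \<times> S)"
  let ?C = "(\<lambda>((T, U), c). cell_game T U c) ` cells"
  have "finite {G \<in> ?B. P G}" "finite {G \<in> ?C. P G}"
    using finite_schedule unfolding schedule_def by (simp_all add: finite_subset)
  moreover have "{G \<in> ?B. P G} \<inter> {G \<in> ?C. P G} = {}"
    using block_game_neq_cell_game by fastforce
  moreover have "{G \<in> schedule. P G} = {G \<in> ?B. P G} \<union> {G \<in> ?C. P G}"
    unfolding schedule_def by blast
  ultimately have "card {G \<in> schedule. P G} = card {G \<in> ?B. P G} + card {G \<in> ?C. P G}"
    by (simp add: card_Un_disjoint)
  also have "\<dots> = card {t \<in> spm \<times> S. P (case_prod block_game t)} +
      card {t \<in> cells. P (case_prod (\<lambda>(T, U). cell_game T U) t)}"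
    using card_filter_image[OF inj_on_block_game] card_filter_image[OF inj_on_cell_game]
    by (simp add: case_prod_beta')
  finally show ?thesis .
qed

lemma block_meetings:
  assumes "x < n" "z < n"
  shows "card {t \<in> spm \<times> S. meets same s s' (case_prod block_game t) (enc n a x) (enc n b z)} =
    (if \<exists>T\<in>spm. player s T = a \<and> player s' T = b then meetings same s s' S x z else 0)"
proof (cases "\<exists>T\<in>spm. player s T = a \<and> player s' T = b")
  case True
  then obtain T0 where T0: "T0 \<in> spm" "player s T0 = a" "player s' T0 = b" by blast
  have "T = T0" if "T \<in> spm" "player s T = a" for T
    using inj_onD[OF spouse_pairs_inj_on_player[OF cmdrr_spouse_pairs[OF outer]]] T0 that by metis
  then have "meets same s s' (block_game T g) (enc n a x) (enc n b z) \<longleftrightarrow>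
      T = T0 \<and> meets same s s' g x z" if "T \<in> spm" "g \<in> S" for T g
    using block_game_meets[OF that(2) assms] T0 that(1) by blast
  then have blocks: "{t \<in> spm \<times> S. meets same s s' (case_prod block_game t) (enc n a x) (enc n b z)} =
      {T0} \<times> {g \<in> S. meets same s s' g x z}"
    using T0(1) by auto
  show ?thesis unfolding if_P[OF True] blocks by (simp add: meetings_def card_cartesian_product)
next
  case False
  then have none: "{t \<in> spm \<times> S. meets same s s' (case_prod block_game t) (enc n a x) (enc n b z)} = {}"
    using block_game_meets assms by fastforce
  show ?thesis unfolding if_not_P[OF False] none by simp
qed

lemma cell_meetings_spouses:
  assumes "same \<longrightarrow> s \<noteq> s'" "T0 \<in> spm" "x < n" "z < n"
  shows "card {t \<in> cells. meets same s s' (case_prod (\<lambda>(T, U). cell_game T U) t)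
    (enc n (player s T0) x) (enc n (player s' T0) z)} = 0"
proof -
  have "\<not> meets same s s' (cell_game T U c) (enc n (player s T0) x) (enc n (player s' T0) z)"
    if "((T, U), c) \<in> cells" for T U c
  proof
    assume "meets same s s' (cell_game T U c) (enc n (player s T0) x) (enc n (player s' T0) z)"
    moreover have "T \<noteq> U" "c \<in> {..<n} \<times> {..<n}" using that unfolding cells_def by auto
    ultimately have "meets same s s' {T, U} (player s T0) (player s' T0)"
      using assms(3,4) by (rule cell_game_meets_outer[rotated -1])
    then show False
      using cmdrr_spouses_never_meet[OF outer _ assms(2,1)] that unfolding cells_def by blast
  qed
  then show ?thesis by (auto simp: card_eq_0_iff)
qed

lemma cell_game_meets_some_cell:
  assumes game: "is_game m {T, U}" and kind: "same \<longrightarrow> s \<noteq> s'"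
    and "meets same s s' {T, U} a b" "x < n" "z < n"
  obtains c where "c \<in> {..<n} \<times> {..<n}" "meets same s s' (cell_game T U c) (enc n a x) (enc n b z)"
proof -
  obtain k k' where seats: "(k = k' \<longleftrightarrow> same)"
    "player s (if k then T else U) = a" "player s' (if k' then T else U) = b"
    using assms(3) unfolding meets_pair[OF is_game_pair_distinct[OF game]] by auto
  have "(k, s) \<noteq> (k', s')" using seats(1) kind by auto
  then have "bij_betw (\<lambda>c. (player s (mols_team L1 L2 c k), player s' (mols_team L1 L2 c k')))
      ({..<n} \<times> {..<n}) ({..<n} \<times> {..<n})"
    by (rule mols_orthogonal_array[OF L1 L2 orth])
  then have "(x, z) \<in> (\<lambda>c. (player s (mols_team L1 L2 c k), player s' (mols_team L1 L2 c k'))) `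
      ({..<n} \<times> {..<n})"
    using assms(4,5) unfolding bij_betw_def by simp
  then obtain c where c: "c \<in> {..<n} \<times> {..<n}"
    "player s (mols_team L1 L2 c k) = x" "player s' (mols_team L1 L2 c k') = z"
    by (auto simp: image_iff)
  have "meets same s s' (cell_game T U c) (enc n a x) (enc n b z)"
    unfolding cell_game_meets[OF is_game_pair_distinct[OF game] c(1) assms(4,5)]
    using seats c(2,3) by (intro exI[of _ k] exI[of _ k']) simp
  then show ?thesis using that c(1) by blast
qed

lemma cell_game_meets_unique_cell:
  assumes game: "is_game m {T, U}" and kind: "same \<longrightarrow> s \<noteq> s'" and "x < n" "z < n"
    and c: "c \<in> {..<n} \<times> {..<n}" "meets same s s' (cell_game T U c) (enc n a x) (enc n b z)"
    and c': "c' \<in> {..<n} \<times> {..<n}" "meets same s s' (cell_game T U c') (enc n a x) (enc n b z)"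
  shows "c = c'"
proof -
  note meets_iff = cell_game_meets[OF is_game_pair_distinct[OF game] _ assms(3,4)]
  obtain k k' where k: "(k = k' \<longleftrightarrow> same)" "player s (if k then T else U) = a"
      "player s' (if k' then T else U) = b"
      "player s (mols_team L1 L2 c k) = x" "player s' (mols_team L1 L2 c k') = z"
    using c(2) unfolding meets_iff[OF c(1)] by auto
  obtain j j' where j: "player s (if j then T else U) = a" "player s' (if j' then T else U) = b"
      "player s (mols_team L1 L2 c' j) = x" "player s' (mols_team L1 L2 c' j') = z"
    using c'(2) unfolding meets_iff[OF c'(1)] by auto
  have "j = k" "j' = k'" using is_game_seat_unique[OF game] j(1,2) k(2,3) by metis+
  moreover have "(k, s) \<noteq> (k', s')" using k(1) kind by auto
  ultimately show ?thesis
    using mols_orthogonal_array[OF L1 L2 orth, of k s k' s'] c(1) c'(1) j(3,4) k(4,5)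
    unfolding bij_betw_def inj_on_def by auto
qed

lemma cell_in_meeting_group_game:
  assumes "((T, U), c) \<in> cells" "x < n" "z < n"
    and "meets same s s' (cell_game T U c) (enc n a x) (enc n b z)"
  shows "{T, U} \<in> {h \<in> Sm. meets same s s' h a b}"
proof -
  have cell: "T \<noteq> U" "c \<in> {..<n} \<times> {..<n}" "{T, U} \<in> Sm"
    using assms(1) unfolding cells_def by auto
  with assms(2-4) have "meets same s s' {T, U} a b" by (intro cell_game_meets_outer)
  with cell(3) show ?thesis unfolding mem_Collect_eq by (rule conjI)
qed

lemma cell_meetings_once:
  assumes kind: "same \<longrightarrow> s \<noteq> s'" and "a < m" "b < m" "x < n" "z < n"
    and not_spouses: "\<not> (\<exists>T\<in>spm. player s T = a \<and> player s' T = b)"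
  shows "card {t \<in> cells. meets same s s' (case_prod (\<lambda>(T, U). cell_game T U) t)
    (enc n a x) (enc n b z)} = 1"
proof -
  obtain h0 where h0: "{h \<in> Sm. meets same s s' h a b} = {h0}"
    using samdrr_meetings_once[OF outer kind assms(2,3) not_spouses]
    unfolding meetings_def by (rule card_1_singletonE)
  then have "h0 \<in> Sm" "meets same s s' h0 a b" by auto
  obtain T U where TU: "h0 = {T, U}" "fst T < fst U"
    using outer_game[OF \<open>h0 \<in> Sm\<close>] by (rule is_game_oriented)
  have game: "is_game m {T, U}" using TU(1) \<open>h0 \<in> Sm\<close> outer_game by simp
  obtain c0 where c0: "c0 \<in> {..<n} \<times> {..<n}"
      "meets same s s' (cell_game T U c0) (enc n a x) (enc n b z)"
    using \<open>meets same s s' h0 a b\<close> unfolding TU(1)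
    by (rule cell_game_meets_some_cell[OF game kind _ assms(4,5)])
  have unique: "t = ((T, U), c0)"
    if "t \<in> cells" "meets same s s' (case_prod (\<lambda>(T, U). cell_game T U) t) (enc n a x) (enc n b z)" for t
  proof -
    obtain T' U' c where t: "t = ((T', U'), c)" by (metis surj_pair)
    have c: "c \<in> {..<n} \<times> {..<n}" "fst T' < fst U'"
      using that(1) unfolding t cells_def by auto
    have meet: "meets same s s' (cell_game T' U' c) (enc n a x) (enc n b z)"
      using that(2) unfolding t by simp
    have "{T', U'} \<in> {h \<in> Sm. meets same s s' h a b}"
      using cell_in_meeting_group_game[OF that(1)[unfolded t] assms(4,5) meet] .
    then have "{T', U'} = {T, U}" unfolding h0 TU(1) by (rule singletonD)
    then have "T' = T" "U' = U" using oriented_pair_eq[OF _ c(2) TU(2)] by blast+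
    with meet have "c = c0"
      using cell_game_meets_unique_cell[OF game kind assms(4,5) c(1) _ c0] by simp
    then show ?thesis using t \<open>T' = T\<close> \<open>U' = U\<close> by simp
  qed
  have "((T, U), c0) \<in> cells" using TU \<open>h0 \<in> Sm\<close> c0(1) unfolding cells_def by simp
  with c0(2) have "((T, U), c0) \<in>
      {t \<in> cells. meets same s s' (case_prod (\<lambda>(T, U). cell_game T U) t) (enc n a x) (enc n b z)}"
    by simp
  moreover have "{t \<in> cells. meets same s s' (case_prod (\<lambda>(T, U). cell_game T U) t) (enc n a x) (enc n b z)}
      \<subseteq> {((T, U), c0)}"
    using unique by blast
  ultimately have "{t \<in> cells. meets same s s' (case_prod (\<lambda>(T, U). cell_game T U) t) (enc n a x) (enc n b z)} =
      {((T, U), c0)}"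
    by blast
  then show ?thesis by simp
qed

lemma schedule_meetings:
  assumes kind: "same \<longrightarrow> s \<noteq> s'" and "a < m" "b < m" "x < n" "z < n"
  shows "meetings same s s' schedule (enc n a x) (enc n b z) =
    (if \<exists>T\<in>spm. player s T = a \<and> player s' T = b then meetings same s s' S x z else 1)"
proof -
  have split: "meetings same s s' schedule (enc n a x) (enc n b z) =
      card {t \<in> spm \<times> S. meets same s s' (case_prod block_game t) (enc n a x) (enc n b z)} +
      card {t \<in> cells. meets same s s' (case_prod (\<lambda>(T, U). cell_game T U) t) (enc n a x) (enc n b z)}"
    unfolding meetings_def by (rule card_filter_schedule)
  show ?thesis
  proof (cases "\<exists>T\<in>spm. player s T = a \<and> player s' T = b")
    case True
    then obtain T0 where T0: "T0 \<in> spm" "player s T0 = a" "player s' T0 = b" by blast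
    have "card {t \<in> cells. meets same s s' (case_prod (\<lambda>(T, U). cell_game T U) t)
        (enc n a x) (enc n b z)} = 0"
      using cell_meetings_spouses[OF kind T0(1) assms(4,5)] T0(2,3) by simp
    then show ?thesis
      unfolding split if_P[OF True] block_meetings[OF assms(4,5), unfolded if_P[OF True]] by simp
  next
    case False
    then show ?thesis
      unfolding split if_not_P[OF False] block_meetings[OF assms(4,5), unfolded if_not_P[OF False]]
        cell_meetings_once[OF assms False] by simp
  qed
qed

lemma spouse_pairs_spouses: "spouse_pairs (m * n) (m * k) spouses"
  unfolding spouses_def
  by (rule spouse_pairs_lift[OF cmdrr_spouse_pairs[OF outer] cmdrr_spouse_pairs[OF inner]])

lemma block_game_is_game:
  assumes "T \<in> spm" "g \<in> S"
  shows "is_game (m * n) (block_game T g)"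
proof -
  obtain p q r w where g: "g = {(p, q), (r, w)}" "p < n" "q < n" "r < n" "w < n" "p \<noteq> r" "q \<noteq> w"
    using inner_game[OF assms(2)] unfolding is_game_def by blast
  have "block_game T g = lift_team n ` {(T, (p, q)), (T, (r, w))}"
    unfolding block_game_def g(1) by auto
  then show ?thesis
    using is_game_lift[of T m T "(p, q)" n "(r, w)"] spm_square[OF assms(1)] g(2-7) by simp
qed

lemma cell_game_is_game:
  assumes "((T, U), c) \<in> cells"
  shows "is_game (m * n) (cell_game T U c)"
proof -
  have game: "is_game m {T, U}" and c: "c \<in> {..<n} \<times> {..<n}"
    using assms outer_game unfolding cells_def by auto
  then have "T \<in> {..<m} \<times> {..<m}" "U \<in> {..<m} \<times> {..<m}"
    using is_game_subset by blast+
  moreover have "player s T \<noteq> player s U" for s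
    using is_game_players_distinct[OF game _ _ is_game_pair_distinct[OF game]] by simp
  from this[of Male] this[of Female] have "fst T \<noteq> fst U" "snd T \<noteq> snd U" by simp_all
  ultimately show ?thesis
    unfolding cell_game_def using mols_team_in_square[OF L1 L2 c] by (intro is_game_lift) simp_all
qed

lemma schedule_game: "G \<in> schedule \<Longrightarrow> is_game (m * n) G"
  unfolding schedule_def using block_game_is_game cell_game_is_game by auto

lemma has_spouse_spouses:
  assumes "a < m" "x < n"
  shows "has_spouse s spouses (enc n a x) \<longleftrightarrow> has_spouse s sp x"
proof
  assume "has_spouse s spouses (enc n a x)"
  then obtain T P where "P \<in> sp" "enc n (player s T) (player s P) = enc n a x"
    unfolding has_spouse_def spouses_def by auto
  moreover have "player s P < n" using sp_square[OF \<open>P \<in> sp\<close>] by (rule player_less)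
  ultimately show "has_spouse s sp x" unfolding has_spouse_def using assms(2) by auto
next
  assume "has_spouse s sp x"
  then obtain P where "P \<in> sp" "player s P = x" unfolding has_spouse_def by blast
  moreover obtain T where "T \<in> spm" "player s T = a"
    using spouse_pairs_has_spouse[OF cmdrr_spouse_pairs[OF outer] assms(1)]
    unfolding has_spouse_def by blast
  ultimately have "lift_team n (T, P) \<in> spouses" "player s (lift_team n (T, P)) = enc n a x"
    unfolding spouses_def by auto
  then show "has_spouse s spouses (enc n a x)" unfolding has_spouse_def by blast
qed

lemma schedule_spouses_apart:
  assumes "G \<in> schedule" "T' \<in> spouses"
  shows "\<not> meets same Male Female G (fst T') (snd T')"
proof
  assume meet: "meets same Male Female G (fst T') (snd T')"
  obtain T P where TP: "T \<in> spm" "P \<in> sp" "T' = lift_team n (T, P)"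
    using assms(2) unfolding spouses_def by blast
  have none: "{g \<in> S. meets same Male Female g (fst P) (snd P)} = {}"
    using cmdrr_spouses_apart[OF inner _ TP(2)] by blast
  have "meetings same Male Female S (fst P) (snd P) = 0" unfolding meetings_def none by simp
  moreover have "\<exists>T0\<in>spm. player Male T0 = fst T \<and> player Female T0 = snd T" using TP(1) by auto
  ultimately have "meetings same Male Female schedule
      (enc n (fst T) (fst P)) (enc n (snd T) (snd P)) = 0"
    using schedule_meetings[of same Male Female "fst T" "snd T" "fst P" "snd P"]
      spm_square[OF TP(1)] sp_square[OF TP(2)] by auto
  moreover have "fst T' = enc n (fst T) (fst P)" "snd T' = enc n (snd T) (snd P)"
    unfolding TP(3) by (simp_all add: lift_team_conv)
  ultimately have "{G \<in> schedule. meets same Male Female G (fst T') (snd T')} = {}"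
    using finite_schedule unfolding meetings_def by simp
  then show False using assms(1) meet by blast
qed

lemma schedule_mixed:
  assumes "A < m * n" "B < m * n" "(A, B) \<notin> spouses"
  shows "meetings same Male Female schedule A B = 1"
proof -
  obtain a x b z where ax: "a < m" "x < n" "A = enc n a x" and bz: "b < m" "z < n" "B = enc n b z"
    using enc_cases[OF assms(1)] enc_cases[OF assms(2)] by metis
  have "(\<exists>T\<in>spm. player Male T = a \<and> player Female T = b) \<longleftrightarrow> (a, b) \<in> spm"
    by (auto intro!: bexI[of _ "(a, b)"])
  then have count: "meetings same Male Female schedule A B =
      (if (a, b) \<in> spm then meetings same Male Female S x z else 1)"
    using schedule_meetings[of same Male Female a b x z] ax bz by simp
  show ?thesis
  proof (cases "(a, b) \<in> spm")
    case True
    have "lift_team n ((a, b), (x, z)) = (A, B)" using ax(3) bz(3) by (simp add: lift_team_conv)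
    then have "(x, z) \<notin> sp" using True assms(3) unfolding spouses_def by force
    then show ?thesis using count cmdrr_mixed[OF inner ax(2) bz(2)] True by simp
  next
    case False
    then show ?thesis using count by simp
  qed
qed

lemma schedule_same_sex_meetings:
  assumes "a < m" "c < m" "x < n" "y < n"
  shows "meetings False s s schedule (enc n a x) (enc n c y) =
    (if a = c then meetings False s s S x y else 1)"
proof -
  have "has_spouse s spm a"
    using spouse_pairs_has_spouse[OF cmdrr_spouse_pairs[OF outer] assms(1)] .
  then have "(\<exists>T\<in>spm. player s T = a \<and> player s T = c) \<longleftrightarrow> a = c"
    unfolding has_spouse_def by auto
  then show ?thesis using schedule_meetings[of False s s a c x y] assms by simp
qed

lemma schedule_same_sex_opposition: "same_sex_opposition s (m * n) spouses schedule"
  unfolding same_sex_opposition_def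
proof (intro conjI allI impI)
  have inner_opp: "same_sex_opposition s n sp S" by (rule cmdrr_same_sex_opposition[OF inner])
  fix A C assume A: "A < m * n" "has_spouse s spouses A" and C: "C < m * n" "C \<noteq> A"
  obtain a x c y where ax: "a < m" "x < n" "A = enc n a x" and cy: "c < m" "y < n" "C = enc n c y"
    using enc_cases[OF A(1)] enc_cases[OF C(1)] by metis
  have "has_spouse s sp x" using A(2) has_spouse_spouses[OF ax(1,2)] ax(3) by simp
  moreover have "a = c \<Longrightarrow> y \<noteq> x" using C(2) ax(3) cy(3) by auto
  ultimately show "meetings False s s schedule A C = 1"
    using inner_opp schedule_same_sex_meetings[OF ax(1) cy(1) ax(2) cy(2)] ax(2,3) cy(2,3)
    unfolding same_sex_opposition_def by auto
next
  have inner_opp: "same_sex_opposition s n sp S" by (rule cmdrr_same_sex_opposition[OF inner])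
  fix A assume A: "A < m * n" "\<not> has_spouse s spouses A"
  obtain a x where ax: "a < m" "x < n" "A = enc n a x" using enc_cases[OF A(1)] by metis
  have "\<not> has_spouse s sp x" using A(2) has_spouse_spouses[OF ax(1,2)] ax(3) by simp
  then obtain y where y: "y < n" "y \<noteq> x" "\<not> has_spouse s sp y" "meetings False s s S x y = 2"
      "\<forall>y'<n. y' \<noteq> x \<and> y' \<noteq> y \<longrightarrow> meetings False s s S x y' = 1"
    using inner_opp ax(2) unfolding same_sex_opposition_def by blast
  have "meetings False s s schedule A C' = 1"
    if C': "C' < m * n" "C' \<noteq> A" "C' \<noteq> enc n a y" for C'
  proof -
    obtain c y' where cy: "c < m" "y' < n" "C' = enc n c y'" using enc_cases[OF C'(1)] by metis
    show ?thesis
      using schedule_same_sex_meetings[OF ax(1) cy(1) ax(2) cy(2)] y(5) C'(2,3) ax(3) cy by auto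
  qed
  moreover have "enc n a y < m * n" using enc_less[OF ax(1) y(1)] .
  moreover have "enc n a y \<noteq> A" using ax y by simp
  moreover have "\<not> has_spouse s spouses (enc n a y)" using has_spouse_spouses[OF ax(1) y(1)] y(3) by simp
  moreover have "meetings False s s schedule A (enc n a y) = 2"
    using schedule_same_sex_meetings[OF ax(1) ax(1) ax(2) y(1)] y(4) ax(3) by simp
  ultimately show "\<exists>C<m * n. C \<noteq> A \<and> \<not> has_spouse s spouses C \<and> meetings False s s schedule A C = 2 \<and>
      (\<forall>C'<m * n. C' \<noteq> A \<and> C' \<noteq> C \<longrightarrow> meetings False s s schedule A C' = 1)"
    by blast
qed

theorem product_is_cmdrr: "is_cmdrr (m * n) (m * k) spouses schedule"
  unfolding is_cmdrr_altdef
  using spouse_pairs_spouses schedule_game schedule_spouses_apart schedule_mixed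
    schedule_same_sex_opposition
  by blast

end

theorem theorem9:
  fixes n k m :: nat
  assumes "CMDRR_exists n k"
    and "SAMDRR_exists m"
    and "two_MOLS_exist n"
  shows "CMDRR_exists (m * n) (m * k)"
proof -
  obtain sp S where "is_cmdrr n k sp S" using assms(1) unfolding CMDRR_exists_def by blast
  moreover obtain spm Sm where "is_cmdrr m m spm Sm"
    using assms(2) unfolding SAMDRR_exists_def CMDRR_exists_def by blast
  moreover obtain L1 L2 where "latin_square n L1" "latin_square n L2" "orthogonal n L1 L2"
    using assms(3) unfolding two_MOLS_exist_def by blast
  ultimately interpret cmdrr_product n k m sp spm S Sm L1 L2 by unfold_locales
  show ?thesis unfolding CMDRR_exists_def using product_is_cmdrr by blast
qed

end
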